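(* Let $(X,\mathrm{dist})$ be a metric space, $\Sigma$ a metric space, and $\{U_\sigma(t,\tau)\}_{\sigma\in\Sigma}$ a family of processes on $X$. Then: (i) $A^\star_\Sigma$ is contained in every closed uniformly attracting set. (ii) For every bounded set $C\subset X$, $\omega_\Sigma(C)\subset A^\star_\Sigma$; moreover $A^\star_\Sigma=\bigcup\omega_\Sigma(C)$, the union taken over all bounded sets $C\subset X$. (iii) If the family is uniformly dissipative, then for every bounded uniformly absorbing set $B$ and every bounded set $C$ we have $\omega_\Sigma(C)\subset\omega_\Sigma(B)=A^\star_\Sigma$; in particular $A^\star_\Sigma$ is closed in $X$.
   Context: A process on $X$ is a family of maps $U(t,\tau):X\to X$, indexed by reals $t\ge\tau$, with $U(\tau,\tau)=\mathrm{id}_X$ and $U(t,\tau)=U(t,s)U(s,\tau)$ for $t\ge s\ge\tau$; no continuity is assumed. For nonempty $B,C\subset X$, $\delta_X(B,C)=\sup_{x\in B}\inf_{\xi\in C}\mathrm{dist}(x,\xi)$. A set $K\subset X$ is uniformly attracting if for every bounded $C\subset X$, $\lim_{t-\tau\to\infty}\sup_{\sigma\in\Sigma}\delta_X(U_\sigma(t,\tau)C,K)=0$. A set $B\subset X$ is uniformly absorbing if for every bounded $C\subset X$ there is $t_e=t_e(C)$ with $U_\sigma(t,\tau)C\subset B$ for all $\sigma\in\Sigma$ whenever $t-\tau\ge t_e$. The family is uniformly dissipative if it has a bounded uniformly absorbing set. $\mathfrak{C}_\Sigma$ is the collection of all sequences $y_n=U_{\sigma_n}(t_n,\tau_n)x_n$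 with $x_n$ a bounded sequence in $X$, $\sigma_n\in\Sigma$, $t_n-\tau_n\to\infty$. For $y_n\in\mathfrak{C}_\Sigma$, $L_\Sigma(y_n)=\{x\in X: y_n\to x \text{ along some subsequence}\}$. $A^\star_\Sigma=\{x\in X: y_n\to x$ along a subsequence, for some $y_n\in\mathfrak{C}_\Sigma\}$. For bounded $C\subset X$, $\omega_\Sigma(C)=\bigcap_{h\ge0}\overline{\bigcup_{\sigma\in\Sigma}\bigcup_{t-\tau\ge h}U_\sigma(t,\tau)C}$ (closure in $X$). These sets may be empty. *)

theory Defs
  imports "HOL-Analysis.Analysis"
begin

definition process_family :: "'s set \<Rightarrow> ('s \<Rightarrow> real \<Rightarrow> real \<Rightarrow> 'a \<Rightarrow> 'a) \<Rightarrow> bool" where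
  "process_family Sig U \<longleftrightarrow>
     (\<forall>\<sigma>\<in>Sig. (\<forall>\<tau>. U \<sigma> \<tau> \<tau> = id) \<and>
        (\<forall>t s \<tau>. \<tau> \<le> s \<and> s \<le> t \<longrightarrow> U \<sigma> t \<tau> = U \<sigma> t s \<circ> U \<sigma> s \<tau>))"

text \<open>Hausdorff semidistance with values in [0,\<infinity>]: sup over empty = 0, inf over empty = \<infinity>.\<close>
definition hsemidist :: "'a::metric_space set \<Rightarrow> 'a set \<Rightarrow> ennreal" where
  "hsemidist B C = (SUP x\<in>B. INF \<xi>\<in>C. ennreal (dist x \<xi>))"

definition unif_attracting :: "'s set \<Rightarrow> ('s \<Rightarrow> real \<Rightarrow> real \<Rightarrow> 'a::metric_space \<Rightarrow> 'a) \<Rightarrow> 'a set \<Rightarrow> bool" where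
  "unif_attracting Sig U K \<longleftrightarrow>
     (\<forall>C. bounded C \<longrightarrow>
        (\<forall>\<epsilon>>0. \<exists>T. \<forall>t \<tau>. t - \<tau> \<ge> T \<longrightarrow>
            (SUP \<sigma>\<in>Sig. hsemidist (U \<sigma> t \<tau> ` C) K) < \<epsilon>))"

definition unif_absorbing :: "'s set \<Rightarrow> ('s \<Rightarrow> real \<Rightarrow> real \<Rightarrow> 'a::metric_space \<Rightarrow> 'a) \<Rightarrow> 'a set \<Rightarrow> bool" where
  "unif_absorbing Sig U B \<longleftrightarrow>
     (\<forall>C. bounded C \<longrightarrow>
        (\<exists>te. \<forall>\<sigma>\<in>Sig. \<forall>t \<tau>. t - \<tau> \<ge> te \<longrightarrow> U \<sigma> t \<tau> ` C \<subseteq> B))"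

definition unif_dissipative :: "'s set \<Rightarrow> ('s \<Rightarrow> real \<Rightarrow> real \<Rightarrow> 'a::metric_space \<Rightarrow> 'a) \<Rightarrow> bool" where
  "unif_dissipative Sig U \<longleftrightarrow> (\<exists>B. bounded B \<and> unif_absorbing Sig U B)"

definition in_CSig :: "'s set \<Rightarrow> ('s \<Rightarrow> real \<Rightarrow> real \<Rightarrow> 'a::metric_space \<Rightarrow> 'a) \<Rightarrow> (nat \<Rightarrow> 'a) \<Rightarrow> bool" where
  "in_CSig Sig U y \<longleftrightarrow>
     (\<exists>x \<sigma> t \<tau>. bounded (range x) \<and> (\<forall>n. \<sigma> n \<in> Sig) \<and>
        filterlim (\<lambda>n. t n - \<tau> n) at_top sequentially \<and>
        (\<forall>n. y n = U (\<sigma> n) (t n) (\<tau> n) (x n)))"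

definition LSig :: "(nat \<Rightarrow> 'a::metric_space) \<Rightarrow> 'a set" where
  "LSig y = {x. \<exists>r. strict_mono r \<and> (y \<circ> r) \<longlonglongrightarrow> x}"

definition Astar :: "'s set \<Rightarrow> ('s \<Rightarrow> real \<Rightarrow> real \<Rightarrow> 'a::metric_space \<Rightarrow> 'a) \<Rightarrow> 'a set" where
  "Astar Sig U = {x. \<exists>y. in_CSig Sig U y \<and> x \<in> LSig y}"

definition omegaSig :: "'s set \<Rightarrow> ('s \<Rightarrow> real \<Rightarrow> real \<Rightarrow> 'a::metric_space \<Rightarrow> 'a) \<Rightarrow> 'a set \<Rightarrow> 'a set" where
  "omegaSig Sig U C =
     (\<Inter>h\<in>{0..}. closure (\<Union>\<sigma>\<in>Sig. \<Union>{U \<sigma> t \<tau> ` C | t \<tau>. t - \<tau> \<ge> h}))"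

end

theory Submission
  imports Defs
begin

text \<open>
  A point of \<open>A\<^sup>\<star>\<close> is a limit of \<open>U\<^sub>\<sigma>\<^sub>n(t\<^sub>n,\<tau>\<^sub>n)x\<^sub>n\<close> with \<open>x\<^sub>n\<close> bounded, hence lies in
  \<open>\<omega>(C)\<close> for \<open>C = {x\<^sub>n}\<close>; conversely a point of \<open>\<omega>(C)\<close> is approximated by such orbit points
  with elapsed times tending to infinity, which gives a sequence in \<open>\<frak>C\<^sub>\<Sigma>\<close>. So
  \<open>A\<^sup>\<star>\<close> is the union of the \<open>\<omega>(C)\<close>, and both remaining claims are statements about
  \<open>\<omega>(C)\<close>: the orbit tails of \<open>C\<close> eventually lie in an \<open>\<epsilon>\<close>-neighbourhood of an attracting
  set \<open>K\<close>, so \<open>\<omega>(C) \<subseteq> K\<close> when \<open>K\<close> is closed; and by the cocycle law the tail of \<open>C\<close> after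
  time \<open>h + t\<^sub>e(C)\<close> lies in the tail of an absorbing set \<open>B\<close> after time \<open>h\<close>, so
  \<open>\<omega>(C) \<subseteq> \<omega>(B)\<close>, which is closed.
\<close>

definition orbit_tail ::
    "'s set \<Rightarrow> ('s \<Rightarrow> real \<Rightarrow> real \<Rightarrow> 'a \<Rightarrow> 'a) \<Rightarrow> 'a set \<Rightarrow> real \<Rightarrow> 'a set" where
  "orbit_tail Sig U C h = (\<Union>\<sigma>\<in>Sig. \<Union>{U \<sigma> t \<tau> ` C | t \<tau>. t - \<tau> \<ge> h})"

lemma mem_orbit_tail_iff:
  "y \<in> orbit_tail Sig U C h \<longleftrightarrow> (\<exists>\<sigma>\<in>Sig. \<exists>t \<tau> c. h \<le> t - \<tau> \<and> c \<in> C \<and> y = U \<sigma> t \<tau> c)"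
  unfolding orbit_tail_def by blast

lemma omegaSig_eq_orbit_tail:
  "omegaSig Sig U C = (\<Inter>h\<in>{0..}. closure (orbit_tail Sig U C h))"
  unfolding omegaSig_def orbit_tail_def ..

lemma closed_omegaSig: "closed (omegaSig Sig U C)"
  unfolding omegaSig_eq_orbit_tail by (intro closed_INT) auto

lemma Astar_iff:
  "x \<in> Astar Sig U \<longleftrightarrow>
     (\<exists>xs \<sigma> t \<tau>. bounded (range xs) \<and> (\<forall>n. \<sigma> n \<in> Sig) \<and>
        filterlim (\<lambda>n. t n - \<tau> n) at_top sequentially \<and>
        (\<lambda>n. U (\<sigma> n) (t n) (\<tau> n) (xs n)) \<longlonglongrightarrow> x)"
  (is "_ \<longleftrightarrow> (\<exists>xs \<sigma> t \<tau>. ?P xs \<sigma> t \<tau>)")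
proof
  assume "x \<in> Astar Sig U"
  then obtain xs \<sigma> t \<tau> r where
    xs: "bounded (range xs)" and \<sigma>: "\<forall>n. \<sigma> n \<in> Sig"
    and t: "filterlim (\<lambda>n. t n - \<tau> n) at_top sequentially"
    and r: "strict_mono r" "(\<lambda>n. U (\<sigma> (r n)) (t (r n)) (\<tau> (r n)) (xs (r n))) \<longlonglongrightarrow> x"
    unfolding Astar_def in_CSig_def LSig_def by (auto simp: o_def)
  have "bounded (range (xs \<circ> r))"
    using xs by (rule bounded_subset) auto
  moreover have "filterlim (\<lambda>n. t (r n) - \<tau> (r n)) at_top sequentially"
    using filterlim_compose[OF t filterlim_subseq[OF r(1)]] by simp
  ultimately have "?P (xs \<circ> r) (\<sigma> \<circ> r) (t \<circ> r) (\<tau> \<circ> r)"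
    using \<sigma> r(2) by (simp add: o_def)
  then show "\<exists>xs \<sigma> t \<tau>. ?P xs \<sigma> t \<tau>" by blast
next
  assume "\<exists>xs \<sigma> t \<tau>. ?P xs \<sigma> t \<tau>"
  then obtain xs \<sigma> t \<tau> where P: "?P xs \<sigma> t \<tau>" by blast
  then have "in_CSig Sig U (\<lambda>n. U (\<sigma> n) (t n) (\<tau> n) (xs n))"
    unfolding in_CSig_def by blast
  moreover have "x \<in> LSig (\<lambda>n. U (\<sigma> n) (t n) (\<tau> n) (xs n))"
    unfolding LSig_def using P by (auto intro: exI[of _ id] simp: strict_mono_def o_def)
  ultimately show "x \<in> Astar Sig U"
    unfolding Astar_def by blast
qed

lemma omegaSig_subset_Astar:
  assumes "bounded C"
  shows "omegaSig Sig U C \<subseteq> Astar Sig U"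
proof
  fix x assume x: "x \<in> omegaSig Sig U C"
  have "\<forall>n. \<exists>\<sigma> t \<tau> c. \<sigma> \<in> Sig \<and> real n \<le> t - \<tau> \<and> c \<in> C \<and>
              dist (U \<sigma> t \<tau> c) x < 1 / Suc n"
  proof
    fix n
    have "x \<in> closure (orbit_tail Sig U C (real n))"
      using x unfolding omegaSig_eq_orbit_tail by auto
    moreover have "0 < 1 / real (Suc n)" by simp
    ultimately obtain y where "y \<in> orbit_tail Sig U C (real n)" "dist y x < 1 / Suc n"
      unfolding closure_approachable by blast
    then show "\<exists>\<sigma> t \<tau> c. \<sigma> \<in> Sig \<and> real n \<le> t - \<tau> \<and> c \<in> C \<and>
                 dist (U \<sigma> t \<tau> c) x < 1 / Suc n"
      unfolding mem_orbit_tail_iff by blast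
  qed
  then obtain \<sigma> t \<tau> c where
    \<sigma>: "\<And>n. \<sigma> n \<in> Sig" and t: "\<And>n. real n \<le> t n - \<tau> n" and c: "\<And>n. c n \<in> C"
    and near: "\<And>n. dist (U (\<sigma> n) (t n) (\<tau> n) (c n)) x < 1 / Suc n"
    unfolding choice_iff by blast
  have "bounded (range c)"
    using assms by (rule bounded_subset) (use c in auto)
  moreover have "filterlim (\<lambda>n. t n - \<tau> n) at_top sequentially"
    using t by (intro filterlim_at_top_mono[OF filterlim_real_sequentially]) auto
  moreover have "(\<lambda>n. U (\<sigma> n) (t n) (\<tau> n) (c n)) \<longlonglongrightarrow> x"
  proof -
    have "(\<lambda>n. dist (U (\<sigma> n) (t n) (\<tau> n) (c n)) x) \<longlonglongrightarrow> 0"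
      using near
      by (intro Lim_null_comparison[OF _ LIMSEQ_inverse_real_of_nat] always_eventually)
         (auto simp: less_imp_le divide_inverse)
    then show ?thesis by (rule tendsto_dist_iff[THEN iffD2])
  qed
  ultimately show "x \<in> Astar Sig U"
    unfolding Astar_iff using \<sigma> by blast
qed

lemma tendsto_orbit_mem_omegaSig:
  assumes "\<forall>n. \<sigma> n \<in> Sig" "filterlim (\<lambda>n. t n - \<tau> n) at_top sequentially"
    and "(\<lambda>n. U (\<sigma> n) (t n) (\<tau> n) (xs n)) \<longlonglongrightarrow> x"
  shows "x \<in> omegaSig Sig U (range xs)"
  unfolding omegaSig_eq_orbit_tail
proof
  fix h :: real
  have "eventually (\<lambda>n. h \<le> t n - \<tau> n) sequentially"
    using assms(2) unfolding filterlim_at_top by blast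
  then have "eventually (\<lambda>n. U (\<sigma> n) (t n) (\<tau> n) (xs n) \<in> closure (orbit_tail Sig U (range xs) h))
      sequentially"
  proof eventually_elim
    case (elim n)
    then have "U (\<sigma> n) (t n) (\<tau> n) (xs n) \<in> orbit_tail Sig U (range xs) h"
      using assms(1) unfolding mem_orbit_tail_iff by blast
    then show ?case
      using closure_subset by blast
  qed
  then show "x \<in> closure (orbit_tail Sig U (range xs) h)"
    by (rule Lim_in_closed_set[OF closed_closure _ trivial_limit_sequentially assms(3)])
qed

lemma Astar_eq_Union_omegaSig:
  "Astar Sig U = (\<Union>C\<in>{C. bounded C}. omegaSig Sig U C)"
proof
  show "Astar Sig U \<subseteq> (\<Union>C\<in>{C. bounded C}. omegaSig Sig U C)"
  proof
    fix x assume "x \<in> Astar Sig U"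
    then obtain xs \<sigma> t \<tau> where "bounded (range xs)" "\<forall>n. \<sigma> n \<in> Sig"
      "filterlim (\<lambda>n. t n - \<tau> n) at_top sequentially"
      "(\<lambda>n. U (\<sigma> n) (t n) (\<tau> n) (xs n)) \<longlonglongrightarrow> x"
      by (subst (asm) Astar_iff) (elim exE conjE)
    then show "x \<in> (\<Union>C\<in>{C. bounded C}. omegaSig Sig U C)"
      using tendsto_orbit_mem_omegaSig[of \<sigma> Sig t \<tau> U xs x] by blast
  qed
  show "(\<Union>C\<in>{C. bounded C}. omegaSig Sig U C) \<subseteq> Astar Sig U"
    using omegaSig_subset_Astar by blast
qed

lemma hsemidist_less_imp_near:
  assumes "hsemidist A K < ennreal e" and "y \<in> A"
  obtains \<xi> where "\<xi> \<in> K" "dist y \<xi> < e"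
proof -
  have "(INF \<xi>\<in>K. ennreal (dist y \<xi>)) \<le> hsemidist A K"
    unfolding hsemidist_def using assms(2) by (rule SUP_upper)
  from this assms(1) have "(INF \<xi>\<in>K. ennreal (dist y \<xi>)) < ennreal e"
    by (rule order.strict_trans1)
  then obtain \<xi> where "\<xi> \<in> K" "ennreal (dist y \<xi>) < ennreal e"
    by (auto simp: INF_less_iff)
  then show thesis
    using that by (simp add: ennreal_less_iff)
qed

lemma unif_attracting_orbit_tail_near:
  assumes "unif_attracting Sig U K" "bounded C" "e > 0"
  obtains T where "\<And>h y. T \<le> h \<Longrightarrow> y \<in> orbit_tail Sig U C h \<Longrightarrow> \<exists>\<xi>\<in>K. dist y \<xi> < e"
proof -
  obtain T where T: "\<And>t \<tau>. T \<le> t - \<tau> \<Longrightarrow> (SUP \<sigma>\<in>Sig. hsemidist (U \<sigma> t \<tau> ` C) K) < ennreal e"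
    using assms unfolding unif_attracting_def by (metis ennreal_eq_0_iff not_gr_zero not_le)
  have "\<exists>\<xi>\<in>K. dist y \<xi> < e" if h: "T \<le> h" and y: "y \<in> orbit_tail Sig U C h" for h y
  proof -
    obtain \<sigma> t \<tau> c where "\<sigma> \<in> Sig" "h \<le> t - \<tau>" "c \<in> C" "y = U \<sigma> t \<tau> c"
      using y unfolding mem_orbit_tail_iff by blast
    moreover from this have "hsemidist (U \<sigma> t \<tau> ` C) K < ennreal e"
      using T[of t \<tau>] h by (meson SUP_upper order.strict_trans1 order.trans)
    ultimately show ?thesis
      by (meson hsemidist_less_imp_near image_eqI)
  qed
  then show thesis by (rule that)
qed

lemma omegaSig_subset_closed_attracting:
  assumes "closed K" "unif_attracting Sig U K" "bounded C"
  shows "omegaSig Sig U C \<subseteq> K"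
proof
  fix x assume x: "x \<in> omegaSig Sig U C"
  have "\<exists>\<xi>\<in>K. dist \<xi> x < e" if "e > 0" for e
  proof -
    obtain T where T: "\<And>h y. T \<le> h \<Longrightarrow> y \<in> orbit_tail Sig U C h \<Longrightarrow> \<exists>\<xi>\<in>K. dist y \<xi> < e / 2"
      using unif_attracting_orbit_tail_near[OF assms(2,3)] \<open>e > 0\<close> half_gt_zero by blast
    have "x \<in> closure (orbit_tail Sig U C (max T 0))"
      using x unfolding omegaSig_eq_orbit_tail by auto
    then obtain y where "y \<in> orbit_tail Sig U C (max T 0)" "dist y x < e / 2"
      using \<open>e > 0\<close> unfolding closure_approachable by (meson half_gt_zero)
    moreover obtain \<xi> where "\<xi> \<in> K" "dist y \<xi> < e / 2"
      using T[OF max.cobounded1] calculation(1) by blast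
    ultimately show ?thesis
      by (metis dist_commute dist_triangle_half_l)
  qed
  then show "x \<in> K"
    using assms(1) closed_approachable by blast
qed

lemma process_family_cocycle:
  assumes "process_family Sig U" "\<sigma> \<in> Sig" "\<tau> \<le> s" "s \<le> t"
  shows "U \<sigma> t \<tau> x = U \<sigma> t s (U \<sigma> s \<tau> x)"
proof -
  have "U \<sigma> t \<tau> = U \<sigma> t s \<circ> U \<sigma> s \<tau>"
    using assms unfolding process_family_def by blast
  then show ?thesis by simp
qed

lemma orbit_tail_subset_absorbing:
  assumes "process_family Sig U" "unif_absorbing Sig U B" "bounded C"
  obtains T where "T \<ge> 0" "\<And>h. 0 \<le> h \<Longrightarrow> orbit_tail Sig U C (h + T) \<subseteq> orbit_tail Sig U B h"
proof -
  obtain te where te: "\<forall>\<sigma>\<in>Sig. \<forall>t \<tau>. t - \<tau> \<ge> te \<longrightarrow> U \<sigma> t \<tau> ` C \<subseteq> B"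
    using assms(2,3) unfolding unif_absorbing_def by blast
  have "y \<in> orbit_tail Sig U B h"
    if "0 \<le> h" and tail: "y \<in> orbit_tail Sig U C (h + max te 0)" for h y
  proof -
    obtain \<sigma> t \<tau> c where \<sigma>: "\<sigma> \<in> Sig" and t: "h + max te 0 \<le> t - \<tau>" and "c \<in> C"
      and y: "y = U \<sigma> t \<tau> c"
      using tail unfolding mem_orbit_tail_iff by blast
    define s where "s = \<tau> + max te 0"
    have "\<tau> \<le> s" "s \<le> t" "h \<le> t - s"
      using t \<open>0 \<le> h\<close> unfolding s_def by auto
    have "U \<sigma> s \<tau> c \<in> B"
    proof -
      have "U \<sigma> s \<tau> ` C \<subseteq> B"
        using te \<sigma> unfolding s_def by simp
      then show ?thesis using \<open>c \<in> C\<close> by blast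
    qed
    moreover have "y = U \<sigma> t s (U \<sigma> s \<tau> c)"
      unfolding y using process_family_cocycle[OF assms(1) \<sigma> \<open>\<tau> \<le> s\<close> \<open>s \<le> t\<close>] .
    ultimately show ?thesis
      using \<sigma> \<open>h \<le> t - s\<close> unfolding mem_orbit_tail_iff by (intro bexI exI conjI) auto
  qed
  then show thesis
    using that[of "max te 0"] by (simp add: subset_iff)
qed

lemma omegaSig_subset_omegaSig_absorbing:
  assumes "process_family Sig U" "unif_absorbing Sig U B" "bounded C"
  shows "omegaSig Sig U C \<subseteq> omegaSig Sig U B"
proof -
  obtain T where "T \<ge> 0" and T: "\<And>h. 0 \<le> h \<Longrightarrow> orbit_tail Sig U C (h + T) \<subseteq> orbit_tail Sig U B h"
    using orbit_tail_subset_absorbing[OF assms] by blast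
  have "omegaSig Sig U C \<subseteq> closure (orbit_tail Sig U B h)" if "0 \<le> h" for h
  proof -
    have "omegaSig Sig U C \<subseteq> closure (orbit_tail Sig U C (h + T))"
      unfolding omegaSig_eq_orbit_tail using \<open>T \<ge> 0\<close> \<open>0 \<le> h\<close> by (intro INT_lower) auto
    also have "\<dots> \<subseteq> closure (orbit_tail Sig U B h)"
      using T[OF \<open>0 \<le> h\<close>] by (rule closure_mono)
    finally show ?thesis .
  qed
  then show ?thesis
    unfolding omegaSig_eq_orbit_tail[of Sig U B] by auto
qed

theorem lemma2p6:
  fixes Sig :: "'s::metric_space set"
    and U :: "'s \<Rightarrow> real \<Rightarrow> real \<Rightarrow> 'a::metric_space \<Rightarrow> 'a"
  assumes "process_family Sig U"
  shows "(\<forall>K. closed K \<and> unif_attracting Sig U K \<longrightarrow> Astar Sig U \<subseteq> K)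
    \<and> (\<forall>C. bounded C \<longrightarrow> omegaSig Sig U C \<subseteq> Astar Sig U)
    \<and> Astar Sig U = (\<Union>C\<in>{C. bounded C}. omegaSig Sig U C)
    \<and> (unif_dissipative Sig U \<longrightarrow>
         (\<forall>B C. bounded B \<and> unif_absorbing Sig U B \<and> bounded C \<longrightarrow>
             omegaSig Sig U C \<subseteq> omegaSig Sig U B \<and> omegaSig Sig U B = Astar Sig U)
         \<and> closed (Astar Sig U))"
proof -
  note union = Astar_eq_Union_omegaSig[of Sig U]
  have attracting: "Astar Sig U \<subseteq> K" if "closed K" "unif_attracting Sig U K" for K
    unfolding union using omegaSig_subset_closed_attracting[OF that] by (intro UN_least) simp
  have absorbing: "omegaSig Sig U B = Astar Sig U"
    if "bounded B" "unif_absorbing Sig U B" for B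
  proof (rule subset_antisym)
    show "omegaSig Sig U B \<subseteq> Astar Sig U"
      using that(1) by (rule omegaSig_subset_Astar)
    show "Astar Sig U \<subseteq> omegaSig Sig U B"
      unfolding union using omegaSig_subset_omegaSig_absorbing[OF assms that(2)] by (intro UN_least) simp
  qed
  have closed: "closed (Astar Sig U)" if "unif_dissipative Sig U"
  proof -
    from that obtain B where "bounded B" "unif_absorbing Sig U B"
      unfolding unif_dissipative_def by (elim exE conjE)
    then show ?thesis
      using closed_omegaSig absorbing by metis
  qed
  show ?thesis
    by (intro conjI union)
       (simp_all add: attracting absorbing closed omegaSig_subset_Astar omegaSig_subset_omegaSig_absorbing[OF assms])
qed

end
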